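(* Let $\mathcal{G}$ be a strongly connected directed graph on $[N]$ containing all self-loops, and let $\epsilon,C_1,C_2>0$. Let $\{M^{(t)}\}_{t\ge0}=\{D^{(t)}A^{(t)}\}_{t\ge0}$ be a sequence in $\mathcal{M}_{\mathcal{G},\epsilon,C_1,C_2}$ and let $P^{(t)}=M^{(t)}M^{(t-1)}\cdots M^{(0)}$. Then the sequence of partial products $\{P^{(t)}\}_{t\ge0}$ is ergodic: there exists a sequence of entrywise positive rank one matrices $\{S^{(t)}\}_{t\ge0}$ such that $\lim_{t\to\infty}P^{(t)}_{ij}/S^{(t)}_{ij}=1$ for all $i,j\in[N]$.
   Context: $\mathcal{A}_{\mathcal{G},\epsilon}$ is the set of $N\times N$ row-stochastic matrices $A$ with $\epsilon\le A_{ij}\le1$ if $(j,i)\in E(\mathcal{G})$ and $A_{ij}=0$ if $(j,i)\notin E(\mathcal{G})$. $\mathcal{D}_{C_1,C_2}$ is the set of diagonal matrices $\mathrm{diag}(\mathbf{d})$ with $C_1\le\mathbf{d}_i\le C_2$ for all $i$. $\mathcal{M}_{\mathcal{G},\epsilon,C_1,C_2}=\{DA: D\in\mathcal{D}_{C_1,C_2},\ A\in\mathcal{A}_{\mathcal{G},\epsilon}\}$. Strongly connected: any two distinct nodes are mutually reachable by directed paths. *)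

theory Defs
  imports "HOL-Analysis.Analysis"
begin

text \<open>Nodes of the graph are the elements of a finite type 'n (playing the role of [N]);
  the directed graph G is given by its edge set E. An edge (j,i) means j -> i.\<close>

definition strongly_connected :: "('n \<times> 'n) set \<Rightarrow> bool" where
  "strongly_connected E \<longleftrightarrow> (\<forall>i j. i \<noteq> j \<longrightarrow> (i, j) \<in> E\<^sup>* \<and> (j, i) \<in> E\<^sup>*)"

definition has_all_self_loops :: "('n \<times> 'n) set \<Rightarrow> bool" where
  "has_all_self_loops E \<longleftrightarrow> (\<forall>i. (i, i) \<in> E)"

definition row_stochastic :: "real^'n^'n \<Rightarrow> bool" where
  "row_stochastic A \<longleftrightarrow> (\<forall>i j. 0 \<le> A $ i $ j) \<and> (\<forall>i. (\<Sum>j\<in>UNIV. A $ i $ j) = 1)"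

definition A_set :: "('n::finite \<times> 'n) set \<Rightarrow> real \<Rightarrow> (real^'n^'n) set" where
  "A_set E \<epsilon> = {A. row_stochastic A \<and>
     (\<forall>i j. ((j, i) \<in> E \<longrightarrow> \<epsilon> \<le> A $ i $ j \<and> A $ i $ j \<le> 1) \<and>
            ((j, i) \<notin> E \<longrightarrow> A $ i $ j = 0))}"

definition D_set :: "real \<Rightarrow> real \<Rightarrow> (real^'n^'n) set" where
  "D_set C1 C2 = {(\<chi> i j. if i = j then d $ i else 0) | d :: real^'n. \<forall>i. C1 \<le> d $ i \<and> d $ i \<le> C2}"

definition M_set :: "('n::finite \<times> 'n) set \<Rightarrow> real \<Rightarrow> real \<Rightarrow> real \<Rightarrow> (real^'n^'n) set" where
  "M_set E \<epsilon> C1 C2 = {D ** A | D A. D \<in> D_set C1 C2 \<and> A \<in> A_set E \<epsilon>}"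

fun partial_prod :: "(nat \<Rightarrow> real^'n^'n) \<Rightarrow> nat \<Rightarrow> real^'n^'n" where
  "partial_prod M 0 = M 0"
| "partial_prod M (Suc t) = M (Suc t) ** partial_prod M t"

definition ergodic :: "(nat \<Rightarrow> real^'n::finite^'n) \<Rightarrow> bool" where
  "ergodic P \<longleftrightarrow> (\<exists>S :: nat \<Rightarrow> real^'n^'n.
      (\<forall>t. rank (S t) = 1 \<and> (\<forall>i j. 0 < S t $ i $ j)) \<and>
      (\<forall>i j. (\<lambda>t. P t $ i $ j / S t $ i $ j) \<longlonglongrightarrow> 1))"

end

theory Submission
  imports Defs
begin

text \<open>Fix a reference column j0. For every column j, the row ratios P(t)_kj / P(t)_kj0 lie in
  an interval [m, m'] that multiplication by a further nonnegative factor cannot widen. Strong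
  connectivity and the self-loops make every product of L consecutive factors entrywise
  between a = (C1 \<epsilon>)^L and b = (N C2)^L, and such a block shrinks the width by the factor
  1 - a/b. Hence all ratios in a column converge to a common positive value, i.e.
  P(t)_ij is asymptotically P(t)_ij0 P(t)_j0j / P(t)_j0j0, a positive rank-one matrix.\<close>

lemma rank_outer_product:
  fixes u v :: "real^'n"
  assumes "u \<noteq> 0" "v \<noteq> 0"
  shows "rank (\<chi> i j. u $ i * v $ j) = 1"
proof -
  let ?S = "(\<chi> i j. u $ i * v $ j) :: real^'n^'n"
  have "rows ?S \<subseteq> span {v}"
    by (auto simp: rows_def row_def span_breakdown_eq vec_eq_iff)
  hence "dim (rows ?S) \<le> dim (span {v})" by (rule dim_subset)
  also have "\<dots> \<le> card {v}" by (simp add: dim_span dim_le_card)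
  finally have "rank ?S \<le> 1" by (simp add: row_rank_def)
  moreover have "?S \<noteq> 0" using assms by (auto simp: vec_eq_iff)
  hence "rank ?S \<noteq> 0" by (simp add: rank_eq_0)
  ultimately show ?thesis by linarith
qed

lemma ergodicI_column_ratios:
  fixes P :: "nat \<Rightarrow> real^'n::finite^'n"
  assumes pos: "\<And>t i j. T \<le> t \<Longrightarrow> 0 < P t $ i $ j"
    and ratios: "\<And>i j. (\<lambda>t. (P t $ i $ j / P t $ i $ j0) / (P t $ j0 $ j / P t $ j0 $ j0)) \<longlonglongrightarrow> 1"
  shows "ergodic P"
proof -
  define u where "u t = (if T \<le> t then (\<chi> i. P t $ i $ j0) else 1)" for t
  define v where "v t = (if T \<le> t then (\<chi> j. P t $ j0 $ j / P t $ j0 $ j0) else 1)" for t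
  define S where "S t = (\<chi> i j. u t $ i * v t $ j)" for t
  have u_pos: "0 < u t $ i" and v_pos: "0 < v t $ i" for t i
    using pos by (simp_all add: u_def v_def)
  have "rank (S t) = 1" for t
    unfolding S_def using u_pos v_pos by (intro rank_outer_product) (metis less_irrefl zero_index)+
  moreover have "0 < S t $ i $ j" for t i j
    using u_pos v_pos by (simp add: S_def)
  moreover have "(\<lambda>t. P t $ i $ j / S t $ i $ j) \<longlonglongrightarrow> 1" for i j
  proof (rule Lim_transform_eventually[OF ratios])
    show "\<forall>\<^sub>F t in sequentially.
        (P t $ i $ j / P t $ i $ j0) / (P t $ j0 $ j / P t $ j0 $ j0) = P t $ i $ j / S t $ i $ j"
      unfolding eventually_sequentially
      by (auto simp: S_def u_def v_def divide_divide_eq_left)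
  qed
  ultimately show ?thesis unfolding ergodic_def by blast
qed

definition ratio_bracket :: "real \<Rightarrow> real \<Rightarrow> real^'n \<Rightarrow> real^'n \<Rightarrow> bool" where
  "ratio_bracket m m' x y \<longleftrightarrow> (\<forall>k. m * y $ k \<le> x $ k \<and> x $ k \<le> m' * y $ k)"

lemma ratio_bracket_iff_ratios:
  assumes "\<And>k. 0 < y $ k"
  shows "ratio_bracket m m' x y \<longleftrightarrow> (\<forall>k. m \<le> x $ k / y $ k \<and> x $ k / y $ k \<le> m')"
  using assms by (simp add: ratio_bracket_def pos_le_divide_eq pos_divide_le_eq)

lemma ratio_bracket_mult_nonneg:
  fixes C :: "real^'n^'n"
  assumes "\<And>i k. 0 \<le> C $ i $ k" and "ratio_bracket m m' x y"
  shows "ratio_bracket m m' (C *v x) (C *v y)"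
  unfolding ratio_bracket_def
proof
  fix i
  have "m * (C *v y) $ i = (\<Sum>k\<in>UNIV. C $ i $ k * (m * y $ k))"
    by (simp add: matrix_vector_mult_def sum_distrib_left algebra_simps)
  also have "\<dots> \<le> (C *v x) $ i"
    unfolding matrix_vector_mult_def using assms
    by (auto simp: ratio_bracket_def intro!: sum_mono mult_left_mono)
  finally have "m * (C *v y) $ i \<le> (C *v x) $ i" .
  moreover have "(C *v x) $ i \<le> (\<Sum>k\<in>UNIV. C $ i $ k * (m' * y $ k))"
    unfolding matrix_vector_mult_def using assms
    by (auto simp: ratio_bracket_def intro!: sum_mono mult_left_mono)
  moreover have "\<dots> = m' * (C *v y) $ i"
    by (simp add: matrix_vector_mult_def sum_distrib_left algebra_simps)
  ultimately show "m * (C *v y) $ i \<le> (C *v x) $ i \<and> (C *v x) $ i \<le> m' * (C *v y) $ i"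
    by simp
qed

lemma lower_ratio_bound_mult_pos_matrix:
  fixes C :: "real^'n^'n" and x y :: "real^'n"
  assumes C: "\<And>i k. a \<le> C $ i $ k \<and> C $ i $ k \<le> b" and a: "0 < a"
    and y: "\<And>k. 0 < y $ k" and x: "\<And>k. m * y $ k \<le> x $ k"
    and r: "r = (\<Sum>k\<in>UNIV. x $ k) / (\<Sum>k\<in>UNIV. y $ k)"
  shows "m \<le> r" and "(m + a / b * (r - m)) * (C *v y) $ i \<le> (C *v x) $ i"
proof -
  define X where "X = (\<Sum>k\<in>UNIV. x $ k)"
  define Y where "Y = (\<Sum>k\<in>UNIV. y $ k)"
  have b: "0 < b" using C[of i i] a by linarith
  have Y: "0 < Y" unfolding Y_def by (rule sum_pos) (auto intro: y)
  have rXY: "r = X / Y" by (simp add: r X_def Y_def)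
  have "m * Y \<le> X" unfolding X_def Y_def sum_distrib_left by (rule sum_mono) (use x in auto)
  then show rm: "m \<le> r" using Y by (simp add: rXY pos_le_divide_eq)
  have Cy: "(C *v y) $ i \<le> b * Y"
    unfolding matrix_vector_mult_def Y_def sum_distrib_left
    by (simp, intro sum_mono mult_right_mono) (use C y in \<open>auto intro: less_imp_le\<close>)
  have "a / b * (r - m) * (C *v y) $ i \<le> a / b * (r - m) * (b * Y)"
    using Cy rm a b by (intro mult_left_mono) auto
  also have "\<dots> = a * (X - m * Y)"
    using b Y unfolding rXY by (simp add: field_simps)
  also have "\<dots> = (\<Sum>k\<in>UNIV. a * (x $ k - m * y $ k))"
    by (simp add: X_def Y_def sum_distrib_left sum_subtractf algebra_simps)
  also have "\<dots> \<le> (\<Sum>k\<in>UNIV. C $ i $ k * (x $ k - m * y $ k))"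
    by (intro sum_mono mult_right_mono) (use C x in auto)
  also have "\<dots> = (C *v x) $ i - m * (C *v y) $ i"
    by (simp add: matrix_vector_mult_def sum_distrib_left sum_subtractf algebra_simps)
  finally show "(m + a / b * (r - m)) * (C *v y) $ i \<le> (C *v x) $ i"
    by (simp add: algebra_simps)
qed

lemma ratio_bracket_contract:
  fixes C :: "real^'n^'n"
  assumes C: "\<And>i k. a \<le> C $ i $ k \<and> C $ i $ k \<le> b" and a: "0 < a"
    and y: "\<And>k. 0 < y $ k" and xy: "ratio_bracket m m' x y"
  shows "\<exists>n n'. m \<le> n \<and> n' - n \<le> (1 - a / b) * (m' - m) \<and>
    ratio_bracket n n' (C *v x) (C *v y)"
proof -
  define r where "r = (\<Sum>k\<in>UNIV. x $ k) / (\<Sum>k\<in>UNIV. y $ k)"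
  have b: "0 < b" using C[of undefined undefined] a by linarith
  have lower: "m \<le> r" "(m + a / b * (r - m)) * (C *v y) $ i \<le> (C *v x) $ i" for i
    using lower_ratio_bound_mult_pos_matrix[OF C a y _ r_def] xy by (auto simp: ratio_bracket_def)
  text \<open>The upper bound is the lower bound for -x against y.\<close>
  have "- m' * y $ k \<le> (- x) $ k" for k using xy by (simp add: ratio_bracket_def)
  moreover have "- r = (\<Sum>k\<in>UNIV. (- x) $ k) / (\<Sum>k\<in>UNIV. y $ k)"
    by (simp add: r_def sum_negf)
  ultimately have neg: "- m' \<le> - r" "(- m' + a / b * (- r - - m')) * (C *v y) $ i \<le> (C *v (- x)) $ i" for i
    by (rule lower_ratio_bound_mult_pos_matrix[OF C a y])+
  have "(C *v (- x)) $ i = - (C *v x) $ i" for i by (simp add: matrix_vector_mult_def sum_negf)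
  then have upper: "r \<le> m'" "(C *v x) $ i \<le> (m' - a / b * (m' - r)) * (C *v y) $ i" for i
    using neg(1) neg(2)[of i] by (auto simp: algebra_simps)
  show ?thesis
  proof (intro exI conjI)
    show "m \<le> m + a / b * (r - m)" using lower a b by simp
    show "m' - a / b * (m' - r) - (m + a / b * (r - m)) \<le> (1 - a / b) * (m' - m)"
      using b by (simp add: field_simps)
    show "ratio_bracket (m + a / b * (r - m)) (m' - a / b * (m' - r)) (C *v x) (C *v y)"
      using lower upper by (simp add: ratio_bracket_def)
  qed
qed

lemma ratio_bracket_eventually_narrow:
  fixes x y :: "nat \<Rightarrow> real^'n"
  assumes mono: "\<And>t m m'. T \<le> t \<Longrightarrow> ratio_bracket m m' (x t) (y t) \<Longrightarrow>
      ratio_bracket m m' (x (Suc t)) (y (Suc t))"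
    and contract: "\<And>t m m'. T \<le> t \<Longrightarrow> ratio_bracket m m' (x t) (y t) \<Longrightarrow>
      \<exists>n n'. m \<le> n \<and> n' - n \<le> q * (m' - m) \<and> ratio_bracket n n' (x (t + L)) (y (t + L))"
    and q: "0 \<le> q" "q < 1"
    and init: "ratio_bracket m0 m0' (x T) (y T)" and e: "0 < e"
  shows "\<exists>T'. \<forall>t\<ge>T'. \<exists>m m'. m0 \<le> m \<and> m' - m < e \<and> ratio_bracket m m' (x t) (y t)"
proof -
  have mono_add: "ratio_bracket m m' (x (t + s)) (y (t + s))"
    if "T \<le> t" "ratio_bracket m m' (x t) (y t)" for t s m m'
    using that by (induction s) (auto intro: mono)
  have geometric: "\<exists>m m'. m0 \<le> m \<and> m' - m \<le> q ^ n * (m0' - m0) \<and>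
      ratio_bracket m m' (x (T + n * L)) (y (T + n * L))" for n
  proof (induction n)
    case 0
    show ?case using init by auto
  next
    case (Suc n)
    then obtain m m' where m: "m0 \<le> m" "m' - m \<le> q ^ n * (m0' - m0)"
      and br: "ratio_bracket m m' (x (T + n * L)) (y (T + n * L))" by blast
    obtain l l' where "m \<le> l" and l: "l' - l \<le> q * (m' - m)"
      and "ratio_bracket l l' (x (T + n * L + L)) (y (T + n * L + L))"
      using contract[OF _ br] by auto
    moreover have "q * (m' - m) \<le> q ^ Suc n * (m0' - m0)"
      using mult_left_mono[OF m(2) q(1)] by simp
    ultimately show ?case using m(1) l by (metis add.assoc add.commute mult_Suc order_trans)
  qed
  have "(\<lambda>n. q ^ n * (m0' - m0)) \<longlonglongrightarrow> 0"
    using q by (intro tendsto_mult_left_zero LIMSEQ_power_zero) auto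
  then obtain n where n: "q ^ n * (m0' - m0) < e"
    using e by (metis (no_types, lifting) eventually_sequentially order_le_less order_tendstoD(2) le_refl)
  obtain m m' where "m0 \<le> m" "m' - m < e" and br: "ratio_bracket m m' (x (T + n * L)) (y (T + n * L))"
    using geometric[of n] n by (meson le_less_trans)
  moreover have "ratio_bracket m m' (x t) (y t)" if "T + n * L \<le> t" for t
    using mono_add[OF _ br, of "t - (T + n * L)"] that by simp
  ultimately show ?thesis by blast
qed

lemma ratio_bracket_pinched_tendsto_1:
  fixes x y :: "nat \<Rightarrow> real^'n"
  assumes c: "0 < c" and y: "\<And>t k. T \<le> t \<Longrightarrow> 0 < y t $ k"
    and pinched: "\<And>e. 0 < e \<Longrightarrow>
      \<exists>T'. \<forall>t\<ge>T'. \<exists>m m'. c \<le> m \<and> m' - m < e \<and> ratio_bracket m m' (x t) (y t)"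
  shows "(\<lambda>t. (x t $ i / y t $ i) / (x t $ j / y t $ j)) \<longlonglongrightarrow> 1"
proof (rule LIMSEQ_I)
  fix e :: real assume e: "0 < e"
  obtain T' where T': "\<And>t. T' \<le> t \<Longrightarrow>
      \<exists>m m'. c \<le> m \<and> m' - m < e * c \<and> ratio_bracket m m' (x t) (y t)"
    using pinched[of "e * c"] e c by auto
  have "norm ((x t $ i / y t $ i) / (x t $ j / y t $ j) - 1) < e" if t: "max T T' \<le> t" for t
  proof -
    define r s where "r = x t $ i / y t $ i" and "s = x t $ j / y t $ j"
    obtain m m' where m: "c \<le> m" "m' - m < e * c" and "ratio_bracket m m' (x t) (y t)"
      using T'[of t] t by auto
    then have rs: "m \<le> r" "r \<le> m'" "m \<le> s" "s \<le> m'"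
      using y t by (auto simp: ratio_bracket_iff_ratios r_def s_def)
    have "\<bar>r - s\<bar> \<le> m' - m" using rs by linarith
    also have "\<dots> < e * c" by (fact m(2))
    also have "\<dots> \<le> e * s" using m rs e by simp
    finally have "\<bar>r - s\<bar> < e * s" .
    then show ?thesis using m rs c by (simp add: r_def[symmetric] s_def[symmetric] abs_less_iff field_simps)
  qed
  then show "\<exists>T. \<forall>t\<ge>T. norm ((x t $ i / y t $ i) / (x t $ j / y t $ j) - 1) < e" by blast
qed

fun block_prod :: "(nat \<Rightarrow> real^'n^'n) \<Rightarrow> nat \<Rightarrow> nat \<Rightarrow> real^'n^'n" where
  "block_prod M t 0 = mat 1"
| "block_prod M t (Suc s) = M (Suc (t + s)) ** block_prod M t s"

lemma partial_prod_add: "partial_prod M (t + s) = block_prod M t s ** partial_prod M t"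
  by (induction s) (auto simp: matrix_mul_assoc)

lemma partial_prod_column_add:
  "(\<chi> k. partial_prod M (t + s) $ k $ j) = block_prod M t s *v (\<chi> k. partial_prod M t $ k $ j)"
  by (simp add: partial_prod_add matrix_matrix_mult_def matrix_vector_mult_def vec_eq_iff)

lemma partial_prod_column_ratios_tendsto_1:
  fixes M :: "nat \<Rightarrow> real^'n::finite^'n"
  assumes nonneg: "\<And>t i k. 0 \<le> M t $ i $ k"
    and block: "\<And>t i k. a \<le> block_prod M t L $ i $ k \<and> block_prod M t L $ i $ k \<le> b"
    and a: "0 < a"
    and pos: "\<And>t i k. T \<le> t \<Longrightarrow> 0 < partial_prod M t $ i $ k"
  defines "P \<equiv> partial_prod M"
  shows "(\<lambda>t. (P t $ i $ j / P t $ i $ j0) / (P t $ j0 $ j / P t $ j0 $ j0)) \<longlonglongrightarrow> 1"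
proof -
  define x where "x t = (\<chi> k. P t $ k $ j)" for t
  define y where "y t = (\<chi> k. P t $ k $ j0)" for t
  have b: "a \<le> b" using block[of 0 j j] by linarith
  have y_pos: "0 < y t $ k" if "T \<le> t" for t k using pos[OF that] by (simp add: y_def P_def)
  have step: "x (t + s) = block_prod M t s *v x t" "y (t + s) = block_prod M t s *v y t" for t s
    by (simp_all only: x_def y_def P_def partial_prod_column_add)
  have mono: "ratio_bracket m m' (x (Suc t)) (y (Suc t))"
    if "ratio_bracket m m' (x t) (y t)" for t m m'
    using ratio_bracket_mult_nonneg[OF _ that, of "M (Suc t)"] step[of t 1] nonneg by simp
  have contract: "\<exists>n n'. m \<le> n \<and> n' - n \<le> (1 - a / b) * (m' - m) \<and>
      ratio_bracket n n' (x (t + L)) (y (t + L))"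
    if "T \<le> t" "ratio_bracket m m' (x t) (y t)" for t m m'
    using ratio_bracket_contract[OF block a y_pos[OF that(1)] that(2)] by (simp add: step)
  define ratios where "ratios = range (\<lambda>k. x T $ k / y T $ k)"
  have init: "ratio_bracket (Min ratios) (Max ratios) (x T) (y T)"
    using y_pos by (simp add: ratio_bracket_iff_ratios ratios_def)
  have Min_pos: "0 < Min ratios"
    using pos y_pos by (auto simp: ratios_def x_def P_def)
  have "(\<lambda>t. (x t $ i / y t $ i) / (x t $ j0 / y t $ j0)) \<longlonglongrightarrow> 1"
    using Min_pos y_pos ratio_bracket_eventually_narrow[OF mono contract _ _ init] a b
    by (intro ratio_bracket_pinched_tendsto_1) auto
  then show ?thesis by (simp add: x_def y_def)
qed

lemma M_set_entry_bounds:
  assumes "M \<in> M_set E \<epsilon> C1 C2" and "0 < C1"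
  shows "0 \<le> M $ i $ k" and "M $ i $ k \<le> C2" and "(k, i) \<in> E \<Longrightarrow> C1 * \<epsilon> \<le> M $ i $ k"
proof -
  obtain d A where M: "M = (\<chi> i j. if i = j then d $ i else 0) ** A"
    and d: "\<And>i. C1 \<le> d $ i \<and> d $ i \<le> C2" and A: "A \<in> A_set E \<epsilon>"
    using assms(1) unfolding M_set_def D_set_def by blast
  have "M $ i $ k = (\<Sum>l\<in>UNIV. if i = l then d $ i * A $ l $ k else 0)"
    unfolding M matrix_matrix_mult_def vec_lambda_beta by (rule sum.cong) auto
  then have Mik: "M $ i $ k = d $ i * A $ i $ k" by simp
  have A_nonneg: "0 \<le> A $ i $ k" using A by (simp add: A_set_def row_stochastic_def)
  have A_le_1: "A $ i $ k \<le> 1" using A by (cases "(k, i) \<in> E") (auto simp: A_set_def)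
  have d_nonneg: "0 \<le> d $ i" using d[of i] assms(2) by linarith
  show M_nonneg: "0 \<le> M $ i $ k" using A_nonneg d_nonneg by (simp add: Mik)
  show "M $ i $ k \<le> C2"
    using mult_mono[OF conjunct2[OF d[of i]] A_le_1 _ A_nonneg] d_nonneg d[of i] by (simp add: Mik)
  show "C1 * \<epsilon> \<le> M $ i $ k" if "(k, i) \<in> E"
  proof (cases "0 \<le> \<epsilon>")
    case True
    have "\<epsilon> \<le> A $ i $ k" using A that by (simp add: A_set_def)
    then show ?thesis using mult_mono[of C1 "d $ i" \<epsilon> "A $ i $ k"] d[of i] d_nonneg True
      by (simp add: Mik)
  next
    case False
    then have "C1 * \<epsilon> \<le> 0" using assms(2) by (simp add: mult_nonneg_nonpos)
    then show ?thesis using M_nonneg by linarith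
  qed
qed

lemma block_prod_nonneg:
  assumes "\<And>t i k. 0 \<le> M t $ i $ k"
  shows "0 \<le> block_prod M t s $ i $ k"
  using assms by (induction s arbitrary: i k) (auto simp: mat_def matrix_matrix_mult_def intro!: sum_nonneg)

lemma block_prod_le:
  fixes M :: "nat \<Rightarrow> real^'n^'n"
  assumes M: "\<And>t i k. 0 \<le> M t $ i $ k \<and> M t $ i $ k \<le> b"
  shows "block_prod M t s $ i $ k \<le> (real CARD('n) * b) ^ s"
proof (induction s arbitrary: i k)
  case 0
  show ?case by (simp add: mat_def)
next
  case (Suc s)
  have M_nonneg: "\<And>t i k. 0 \<le> M t $ i $ k" using M by blast
  have "0 \<le> b" using M[of 0 i i] by linarith
  have "block_prod M t (Suc s) $ i $ k = (\<Sum>l\<in>UNIV. M (Suc (t + s)) $ i $ l * block_prod M t s $ l $ k)"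
    by (simp add: matrix_matrix_mult_def)
  also have "\<dots> \<le> (\<Sum>l\<in>(UNIV::'n set). b * (real CARD('n) * b) ^ s)"
    by (intro sum_mono mult_mono) (use M Suc.IH block_prod_nonneg[OF M_nonneg] \<open>0 \<le> b\<close> in auto)
  also have "\<dots> = (real CARD('n) * b) ^ Suc s" by simp
  finally show ?case .
qed

text \<open>Self-loops let a path of length m \<le> s be padded to a walk of length exactly s.\<close>

lemma block_prod_ge_relpow:
  assumes nonneg: "\<And>t i k. 0 \<le> M t $ i $ k"
    and edge: "\<And>t i k. (k, i) \<in> E \<Longrightarrow> c \<le> M t $ i $ k"
    and loops: "\<And>i. (i, i) \<in> E" and c: "0 \<le> c"
    and path: "(k, i) \<in> E ^^ m" "m \<le> s"
  shows "c ^ s \<le> block_prod M t s $ i $ k"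
  using path
proof (induction s arbitrary: i m)
  case 0
  then show ?case by (simp add: mat_def)
next
  case (Suc s)
  obtain l where l: "(l, i) \<in> E" "c ^ s \<le> block_prod M t s $ l $ k"
  proof (cases "m \<le> s")
    case True
    then show ?thesis using that[of i] Suc.IH[OF Suc.prems(1)] loops by auto
  next
    case False
    then have "(k, i) \<in> E ^^ Suc s" using Suc.prems by (metis le_Suc_eq)
    then obtain l where "(k, l) \<in> E ^^ s" "(l, i) \<in> E" by auto
    then show ?thesis using that Suc.IH[of l s] by auto
  qed
  have "c ^ Suc s \<le> M (Suc (t + s)) $ i $ l * block_prod M t s $ l $ k"
    using mult_mono[OF edge[OF l(1)] l(2)] c nonneg by simp
  also have "\<dots> \<le> (\<Sum>l\<in>UNIV. M (Suc (t + s)) $ i $ l * block_prod M t s $ l $ k)"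
    by (rule member_le_sum) (use nonneg block_prod_nonneg[OF nonneg] in auto)
  finally show ?case by (simp add: matrix_matrix_mult_def)
qed

lemma partial_prod_nonneg:
  assumes "\<And>t i k. 0 \<le> M t $ i $ k"
  shows "0 \<le> partial_prod M t $ i $ k"
  using assms by (induction t arbitrary: i k) (auto simp: matrix_matrix_mult_def intro!: sum_nonneg)

lemma partial_prod_diag_ge:
  assumes nonneg: "\<And>t i k. 0 \<le> M t $ i $ k"
    and diag: "\<And>t k. c \<le> M t $ k $ k" and c: "0 \<le> c"
  shows "c ^ Suc t \<le> partial_prod M t $ k $ k"
proof (induction t)
  case 0
  show ?case using diag by simp
next
  case (Suc t)
  have "c ^ Suc (Suc t) \<le> M (Suc t) $ k $ k * partial_prod M t $ k $ k"
    using mult_mono[OF diag[of "Suc t" k] Suc.IH] c nonneg by simp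
  also have "\<dots> \<le> (\<Sum>l\<in>UNIV. M (Suc t) $ k $ l * partial_prod M t $ l $ k)"
    by (rule member_le_sum) (use nonneg partial_prod_nonneg[OF nonneg] in auto)
  finally show ?case by (simp add: matrix_matrix_mult_def)
qed

lemma strongly_connected_relpow_bounded:
  fixes E :: "('n::finite \<times> 'n) set"
  assumes "strongly_connected E"
  obtains L where "\<And>k i. \<exists>m\<le>L. (k, i) \<in> E ^^ m"
proof -
  have "\<exists>m. (k, i) \<in> E ^^ m" for k i
  proof (cases "k = i")
    case True
    then show ?thesis by (intro exI[of _ 0]) simp
  next
    case False
    then show ?thesis using assms by (simp add: strongly_connected_def rtrancl_power)
  qed
  then have "\<forall>p. \<exists>m. p \<in> E ^^ m" by auto
  then obtain f where f: "\<And>p. p \<in> E ^^ f p" by metis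
  have "\<exists>m\<le>Max (range f). (k, i) \<in> E ^^ m" for k i
    using f[of "(k, i)"] by (intro exI[of _ "f (k, i)"]) simp
  then show ?thesis by (rule that)
qed

lemma partial_prod_pos:
  assumes nonneg: "\<And>t i k. 0 \<le> M t $ i $ k"
    and edge: "\<And>t i k. (k, i) \<in> E \<Longrightarrow> c \<le> M t $ i $ k"
    and loops: "\<And>i. (i, i) \<in> E" and c: "0 < c"
    and paths: "\<And>k i. \<exists>m\<le>L. (k, i) \<in> E ^^ m" and "L \<le> t"
  shows "0 < partial_prod M t $ i $ k"
proof -
  obtain s where t: "t = s + L" using \<open>L \<le> t\<close> by (metis le_add_diff_inverse2)
  obtain m where m: "(k, i) \<in> E ^^ m" "m \<le> L" using paths by blast
  have "0 < c ^ L * c ^ Suc s" using c by simp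
  also have "\<dots> \<le> block_prod M s L $ i $ k * partial_prod M s $ k $ k"
    using block_prod_ge_relpow[where M = M, OF nonneg edge loops _ m]
      partial_prod_diag_ge[where M = M, OF nonneg edge[OF loops]] block_prod_nonneg[where M = M, OF nonneg] c
    by (intro mult_mono) auto
  also have "\<dots> \<le> (\<Sum>l\<in>UNIV. block_prod M s L $ i $ l * partial_prod M s $ l $ k)"
    by (rule member_le_sum)
      (use block_prod_nonneg[where M = M, OF nonneg] partial_prod_nonneg[where M = M, OF nonneg] in auto)
  also have "\<dots> = partial_prod M t $ i $ k"
    by (simp add: t partial_prod_add matrix_matrix_mult_def)
  finally show ?thesis .
qed

theorem mainTheorem9:
  fixes E :: "('n::finite \<times> 'n) set"
    and \<epsilon> C1 C2 :: real
    and M :: "nat \<Rightarrow> real^'n^'n"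
  assumes "strongly_connected E"
    and "has_all_self_loops E"
    and "0 < \<epsilon>" and "0 < C1" and "0 < C2"
    and "\<forall>t. M t \<in> M_set E \<epsilon> C1 C2"
  shows "ergodic (partial_prod M)"
proof -
  define c where "c = C1 * \<epsilon>"
  have c: "0 < c" using assms(3,4) by (simp add: c_def)
  have bounds: "\<And>t i k. 0 \<le> M t $ i $ k \<and> M t $ i $ k \<le> C2"
    and edge: "\<And>t i k. (k, i) \<in> E \<Longrightarrow> c \<le> M t $ i $ k"
    using M_set_entry_bounds[OF assms(6)[rule_format] assms(4)] by (auto simp: c_def)
  have nonneg: "\<And>t i k. 0 \<le> M t $ i $ k" using bounds by blast
  have loops: "\<And>i. (i, i) \<in> E" using assms(2) by (simp add: has_all_self_loops_def)
  obtain L where paths: "\<And>k i. \<exists>m\<le>L. (k, i) \<in> E ^^ m"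
    using strongly_connected_relpow_bounded[OF assms(1)] by blast
  have block: "c ^ L \<le> block_prod M t L $ i $ k \<and> block_prod M t L $ i $ k \<le> (real CARD('n) * C2) ^ L"
    for t i k
    using paths[of k i] block_prod_ge_relpow[where M = M, OF nonneg edge loops] block_prod_le[where M = M, OF bounds] c
    by (meson less_imp_le)
  have pos: "\<And>t i k. L \<le> t \<Longrightarrow> 0 < partial_prod M t $ i $ k"
    by (rule partial_prod_pos[where M = M, OF nonneg edge loops c paths])
  have "0 < c ^ L" using c by simp
  show ?thesis
    by (rule ergodicI_column_ratios[OF pos partial_prod_column_ratios_tendsto_1[OF nonneg block \<open>0 < c ^ L\<close> pos]])
qed

end
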